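(* Let $d\in\mathbb{N}$, $a<b$, $\alpha\in[0,1]$, $\rho\in\mathbb{R}^{d\times d}$ an invertible diagonal matrix, and $H:\mathbb{R}^d\times\mathbb{R}^d\to\mathbb{R}$, $(z,p_z)\mapsto H(z,p_z)$, a $C^1$ function that is even in its second variable, $H(z,-p_z)=H(z,p_z)$. Consider the systems, for smooth curves on $[a,b]$, $$\text{(a)}\quad \dot x=\frac{\partial H}{\partial p_x}(x,p_x),\quad D^\alpha_-x=-\rho^{-1}p^\alpha_y,\quad \dot p_x=-\frac{\partial H}{\partial x}(x,p_x)+D^\alpha_-p^\alpha_y,$$ $$\text{(b)}\quad \dot y=\frac{\partial H}{\partial p_y}(y,p_y),\quad D^\alpha_+y=-\rho^{-1}p^\alpha_x,\quad \dot p_y=-\frac{\partial H}{\partial y}(y,p_y)+D^\alpha_+p^\alpha_x.$$ Let $x,p_x,p^\alpha_y:[a,b]\to\mathbb{R}^d$ be smooth and set $y(t):=x(a+b-t)$, $p_y(t):=-p_x(a+b-t)$, $p^\alpha_x(t):=p^\alpha_y(a+b-t)$ (equivalently $p^\alpha_y(t)=p^\alpha_x(a+b-t)$). Then system (b) is system (a) in reversed time $\tilde t=a+b-t$: each equation of (b) holds at time $t$ if and only if the corresponding equation of (a) holds at time $\tilde t=a+b-t$.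
   Context: For $f:[a,b]\to\mathbb{R}$ (componentwise for vector-valued functions), $D^\alpha_-f(t)=\frac{1}{\Gamma(1-\alpha)}\frac{d}{dt}\int_a^t(t-\tau)^{-\alpha}f(\tau)\,d\tau$ and $D^\alpha_+f(t)=-\frac{1}{\Gamma(1-\alpha)}\frac{d}{dt}\int_t^b(\tau-t)^{-\alpha}f(\tau)\,d\tau$ (Riemann–Liouville fractional derivatives). Systems (a),(b) are the restricted fractional Hamilton equations for the Hamiltonian $H(x,p_x)+H(y,p_y)-p^\alpha_x\,\rho^{-1}\,p^\alpha_y$. *)

theory Defs
  imports "HOL-Analysis.Analysis"
begin

text \<open>Left Riemann-Liouville fractional derivative on [a,b]:
  D^alpha_- f(t) = v, i.e. the function s |-> 1/Gamma(1-alpha) * int_a^s (s-tau)^(-alpha) f(tau) dtau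
  has derivative v at t (relative to [a,b]). 1/Gamma is rGamma (rGamma 0 = 0).\<close>
definition rl_left_deriv ::
  "real \<Rightarrow> real \<Rightarrow> real \<Rightarrow> (real \<Rightarrow> real^'d) \<Rightarrow> real \<Rightarrow> real^'d \<Rightarrow> bool" where
  "rl_left_deriv \<alpha> a b f t v \<longleftrightarrow>
     ((\<lambda>s. rGamma (1 - \<alpha>) *\<^sub>R integral {a..s} (\<lambda>\<tau>. (s - \<tau>) powr (- \<alpha>) *\<^sub>R f \<tau>))
        has_vector_derivative v) (at t within {a..b})"

definition rl_right_deriv ::
  "real \<Rightarrow> real \<Rightarrow> real \<Rightarrow> (real \<Rightarrow> real^'d) \<Rightarrow> real \<Rightarrow> real^'d \<Rightarrow> bool" where
  "rl_right_deriv \<alpha> a b f t v \<longleftrightarrow>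
     ((\<lambda>s. - (rGamma (1 - \<alpha>) *\<^sub>R integral {s..b} (\<lambda>\<tau>. (\<tau> - s) powr (- \<alpha>) *\<^sub>R f \<tau>)))
        has_vector_derivative v) (at t within {a..b})"

definition grad_z :: "(real^'d \<Rightarrow> real^'d \<Rightarrow> real) \<Rightarrow> real^'d \<Rightarrow> real^'d \<Rightarrow> real^'d" where
  "grad_z H z p = (\<chi> i. frechet_derivative (\<lambda>(u, w). H u w) (at (z, p)) (axis i 1, 0))"

definition grad_p :: "(real^'d \<Rightarrow> real^'d \<Rightarrow> real) \<Rightarrow> real^'d \<Rightarrow> real^'d \<Rightarrow> real^'d" where
  "grad_p H z p = (\<chi> i. frechet_derivative (\<lambda>(u, w). H u w) (at (z, p)) (0, axis i 1))"

definition C1_hamiltonian :: "(real^'d \<Rightarrow> real^'d \<Rightarrow> real) \<Rightarrow> bool" where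
  "C1_hamiltonian H \<longleftrightarrow>
     (\<forall>w. (\<lambda>(u, v). H u v) differentiable (at w)) \<and>
     continuous_on UNIV (\<lambda>(z, p). grad_z H z p) \<and>
     continuous_on UNIV (\<lambda>(z, p). grad_p H z p)"

definition smooth_curve :: "real \<Rightarrow> real \<Rightarrow> (real \<Rightarrow> 'v::real_normed_vector) \<Rightarrow> bool" where
  "smooth_curve a b f \<longleftrightarrow>
     (\<exists>D :: nat \<Rightarrow> real \<Rightarrow> 'v. D 0 = f \<and>
        (\<forall>k. \<forall>t\<in>{a..b}. (D k has_vector_derivative D (Suc k) t) (at t within {a..b})))"

definition diagonal_matrix :: "real^'d^'d \<Rightarrow> bool" where
  "diagonal_matrix \<rho> \<longleftrightarrow> (\<forall>i j. i \<noteq> j \<longrightarrow> \<rho> $ i $ j = 0)"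

end

theory Submission
  imports Defs
begin

(* The time reflection t \<mapsto> a + b - t maps [a,b] onto itself and changes the sign of ordinary
   derivatives. Substituting it in the Riemann-Liouville integral turns the left integral
   of f into the right integral of the reflected curve, and since D^\<alpha>_+ carries an extra
   minus sign, D^\<alpha>_+ of the reflected curve is D^\<alpha>_- of f at the reflected time.
   Evenness of H in p makes \<partial>H/\<partial>p odd and \<partial>H/\<partial>z even in p, which absorbs the sign
   change of p_y = -p_x. *)

lemma integral_reflect_shift_real:
  fixes g :: "real \<Rightarrow> 'v::real_normed_vector"
  shows "integral {s..b} (\<lambda>\<tau>. g (a + b - \<tau>)) = integral {a..a + b - s} g"
proof -
  have "integral {s..b} (\<lambda>\<tau>. g (a + b - \<tau>)) = integral {-b..-s} (\<lambda>\<sigma>. g (\<sigma> + (a + b)))"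
    using Henstock_Kurzweil_Integration.integral_reflect_real[of "-s" "-b" "\<lambda>\<sigma>. g (\<sigma> + (a + b))"] by (simp add: algebra_simps)
  also have "\<dots> = integral {a - (a + b)..(a + b - s) - (a + b)} (\<lambda>\<sigma>. g (\<sigma> + (a + b)))"
    by simp
  also have "\<dots> = integral {a..a + b - s} g"
    by (rule integral_shift_real_ivl)
  finally show ?thesis .
qed

lemma has_vector_derivative_reflect:
  fixes g :: "real \<Rightarrow> 'v::real_normed_vector"
  assumes "(g has_vector_derivative w) (at (a + b - t) within {a..b})"
  shows "((\<lambda>s. g (a + b - s)) has_vector_derivative - w) (at t within {a..b})"
proof -
  have reflection: "((\<lambda>s. a + b - s) has_vector_derivative -1) (at t within {a..b})"
    by (auto intro!: derivative_eq_intros)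
  have "(\<lambda>s. a + b - s) ` {a..b} = {a..b}"
    by (auto intro!: image_eqI[where x = "a + b - _"])
  with assms have "(g has_vector_derivative w) (at (a + b - t) within (\<lambda>s. a + b - s) ` {a..b})"
    by simp
  from vector_diff_chain_within[OF reflection this] show ?thesis
    by (simp add: o_def)
qed

lemma has_vector_derivative_reflect_iff:
  fixes g :: "real \<Rightarrow> 'v::real_normed_vector"
  shows "((\<lambda>s. g (a + b - s)) has_vector_derivative - w) (at t within {a..b})
     \<longleftrightarrow> (g has_vector_derivative w) (at (a + b - t) within {a..b})"
  using has_vector_derivative_reflect[of g w a b t]
    has_vector_derivative_reflect[of "\<lambda>s. g (a + b - s)" "- w" a b "a + b - t"]
  by auto

lemma has_vector_derivative_uminus_iff:
  fixes g :: "real \<Rightarrow> 'v::real_normed_vector"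
  shows "((\<lambda>s. - g s) has_vector_derivative - w) F \<longleftrightarrow> (g has_vector_derivative w) F"
  using has_vector_derivative_minus[of g w F] has_vector_derivative_minus[of "\<lambda>s. - g s" "- w" F]
  by auto

lemma rl_right_deriv_reflect:
  fixes f :: "real \<Rightarrow> real^'d"
  shows "rl_right_deriv \<alpha> a b (\<lambda>s. f (a + b - s)) t v \<longleftrightarrow> rl_left_deriv \<alpha> a b f (a + b - t) v"
proof -
  define G where
    "G = (\<lambda>s. rGamma (1 - \<alpha>) *\<^sub>R integral {a..s} (\<lambda>\<tau>. (s - \<tau>) powr (- \<alpha>) *\<^sub>R f \<tau>))"
  have "integral {s..b} (\<lambda>\<tau>. (\<tau> - s) powr (- \<alpha>) *\<^sub>R f (a + b - \<tau>))
      = integral {a..a + b - s} (\<lambda>\<sigma>. (a + b - s - \<sigma>) powr (- \<alpha>) *\<^sub>R f \<sigma>)" for s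
    using integral_reflect_shift_real[of s b "\<lambda>\<sigma>. (a + b - s - \<sigma>) powr (- \<alpha>) *\<^sub>R f \<sigma>" a]
    by (simp add: algebra_simps)
  then have "rl_right_deriv \<alpha> a b (\<lambda>s. f (a + b - s)) t v
      \<longleftrightarrow> ((\<lambda>s. - G (a + b - s)) has_vector_derivative - (- v)) (at t within {a..b})"
    by (simp add: rl_right_deriv_def G_def)
  also have "\<dots> \<longleftrightarrow> ((\<lambda>u. - G u) has_vector_derivative - v) (at (a + b - t) within {a..b})"
    by (rule has_vector_derivative_reflect_iff)
  also have "\<dots> \<longleftrightarrow> rl_left_deriv \<alpha> a b f (a + b - t) v"
    by (simp only: has_vector_derivative_uminus_iff rl_left_deriv_def G_def)
  finally show ?thesis .
qed

lemma frechet_derivative_even_snd: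
  fixes h :: "'a::real_normed_vector \<times> 'b::real_normed_vector \<Rightarrow> 'c::real_normed_vector"
  assumes "h differentiable (at (z, - p))"
    and even: "\<And>u w. h (u, - w) = h (u, w)"
  shows "frechet_derivative h (at (z, p)) = frechet_derivative h (at (z, - p)) \<circ> (\<lambda>(u, w). (u, - w))"
proof -
  define L :: "'a \<times> 'b \<Rightarrow> 'a \<times> 'b" where "L = (\<lambda>(u, w). (u, - w))"
  have "bounded_linear L"
    unfolding L_def split_def
    by (intro bounded_linear_Pair bounded_linear_fst bounded_linear_minus bounded_linear_snd)
  then have "(L has_derivative L) (at (z, p))"
    by (rule bounded_linear_imp_has_derivative)
  moreover have "(h has_derivative frechet_derivative h (at (z, - p))) (at (L (z, p)))"
    using assms(1) by (simp add: L_def frechet_derivative_works[symmetric])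
  ultimately have "((h \<circ> L) has_derivative frechet_derivative h (at (z, - p)) \<circ> L) (at (z, p))"
    by (rule diff_chain_at)
  moreover have "h \<circ> L = h"
    by (auto simp: L_def even)
  ultimately show ?thesis
    unfolding L_def by (metis frechet_derivative_at)
qed

lemma
  fixes H :: "real^'d \<Rightarrow> real^'d \<Rightarrow> real"
  assumes "(\<lambda>(u, w). H u w) differentiable (at (z, - p))"
    and "\<And>u w. H u (- w) = H u w"
  shows grad_p_uminus: "grad_p H z (- p) = - grad_p H z p"
    and grad_z_uminus: "grad_z H z (- p) = grad_z H z p"
proof -
  define D where "D = frechet_derivative (\<lambda>(u, w). H u w) (at (z, - p))"
  have "linear D"
    using assms(1) unfolding D_def by (metis frechet_derivative_works has_derivative_linear)
  then have D_odd: "D (0, - e) = - D (0, e)" for e :: "real^'d"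
    using linear_neg[of D "(0, e)"] by simp
  have "frechet_derivative (\<lambda>(u, w). H u w) (at (z, p)) = D \<circ> (\<lambda>(u, w). (u, - w))"
    unfolding D_def by (rule frechet_derivative_even_snd) (use assms in auto)
  then show "grad_p H z (- p) = - grad_p H z p" and "grad_z H z (- p) = grad_z H z p"
    unfolding grad_p_def grad_z_def D_def[symmetric] by (simp_all add: D_odd vec_eq_iff)
qed

theorem proposition3p13:
  fixes a b \<alpha> :: real
    and \<rho> :: "real^'d^'d"
    and H :: "real^'d \<Rightarrow> real^'d \<Rightarrow> real"
    and x px pya y py pxa :: "real \<Rightarrow> real^'d"
  assumes "a < b"
    and "0 \<le> \<alpha>" and "\<alpha> \<le> 1"
    and "invertible \<rho>" and "diagonal_matrix \<rho>"
    and "C1_hamiltonian H"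
    and "\<And>z p. H z (- p) = H z p"
    and "smooth_curve a b x" and "smooth_curve a b px" and "smooth_curve a b pya"
    and "\<And>t. y t = x (a + b - t)"
    and "\<And>t. py t = - px (a + b - t)"
    and "\<And>t. pxa t = pya (a + b - t)"
    and "t \<in> {a..b}"
  shows
    "((y has_vector_derivative grad_p H (y t) (py t)) (at t within {a..b})
       \<longleftrightarrow> (x has_vector_derivative grad_p H (x (a + b - t)) (px (a + b - t)))
             (at (a + b - t) within {a..b})) \<and>
    (rl_right_deriv \<alpha> a b y t (- (matrix_inv \<rho> *v pxa t))
       \<longleftrightarrow> rl_left_deriv \<alpha> a b x (a + b - t) (- (matrix_inv \<rho> *v pya (a + b - t)))) \<and>
    ((\<exists>v. rl_right_deriv \<alpha> a b pxa t v \<and>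
          (py has_vector_derivative (- grad_z H (y t) (py t) + v)) (at t within {a..b}))
       \<longleftrightarrow> (\<exists>v. rl_left_deriv \<alpha> a b pya (a + b - t) v \<and>
          (px has_vector_derivative (- grad_z H (x (a + b - t)) (px (a + b - t)) + v))
            (at (a + b - t) within {a..b})))"
proof -
  have y: "y = (\<lambda>s. x (a + b - s))" and py: "py = (\<lambda>s. - px (a + b - s))"
    and pxa: "pxa = (\<lambda>s. pya (a + b - s))"
    using assms(11-13) by auto
  have "(\<lambda>(u, w). H u w) differentiable (at (z, p))" for z p
    using assms(6) by (simp add: C1_hamiltonian_def)
  note grad_uminus = grad_p_uminus[OF this assms(7)] grad_z_uminus[OF this assms(7)]
  have py_deriv_iff: "(py has_vector_derivative w) (at t within {a..b})
      \<longleftrightarrow> (px has_vector_derivative w) (at (a + b - t) within {a..b})" for w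
    using has_vector_derivative_reflect_iff[of "\<lambda>s. - px s" a b "- w" t]
    by (simp add: py has_vector_derivative_uminus_iff)
  show ?thesis
    by (simp add: y py pxa grad_uminus has_vector_derivative_reflect_iff rl_right_deriv_reflect
        py_deriv_iff[unfolded py])
qed

end
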